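(* Let $\mathcal{N}$ (from $X$, $|X|=m$, to $Y$, $|Y|=n$) and $\mathcal{M}$ (from $X'$, $|X'|=m'$, to $Y$) be classical channels whose columns $\mathbf{p}_x=\mathcal{N}(\mathbf{e}_x)$, $x\in[m]$, and $\mathbf{q}_w=\mathcal{M}(\mathbf{e}_w)$, $w\in[m']$, all have entries in non-increasing order (e.g. both channels are in standard form). The following are equivalent: (1) $\mathcal{N}\succ\mathcal{M}$; (2) $\mathrm{Conv}(\mathcal{N})\succ\mathrm{Conv}(\mathcal{M})$ as sets; (3) there is an $m\times m'$ column-stochastic matrix $S=(s_{x|w})$ with $\sum_{x\in[m]}s_{x|w}\mathbf{p}_x\succ\mathbf{q}_w$ for all $w\in[m']$; (4) for all $\mathbf{s}\in\mathrm{Prob}^{\downarrow}(n)$, $\max_{x\in[m]}\mathbf{s}\cdot\mathbf{p}_x\ge\max_{w\in[m']}\mathbf{s}\cdot\mathbf{q}_w$; (5) for all $\mathbf{t}\in\mathrm{Prob}(n)$ and all $w\in[m']$, $\max_{x\in[m]}\sum_{k\in[n]}t_k\frac{\|\mathbf{p}_x\|_{(k)}}{\|\mathbf{q}_w\|_{(k)}}\ge1$.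
   Context: A classical channel is given by a column-stochastic transition matrix; $\mathbf{e}_x$ are standard basis vectors. For $\mathbf{p}\in\mathrm{Prob}(n)$, $\|\mathbf{p}\|_{(k)}$ is the sum of its $k$ largest entries; $\mathbf{p}\succ\mathbf{q}$ means $\|\mathbf{p}\|_{(k)}\ge\|\mathbf{q}\|_{(k)}$ for all $k\in[n]$. $\mathrm{Prob}^{\downarrow}(n)$ is the set of probability vectors with non-increasing entries. $\mathrm{Conv}(\mathcal{N})$ and $\mathrm{Conv}(\mathcal{M})$ are the convex hulls of $\{\mathbf{p}_x\}$ and $\{\mathbf{q}_w\}$. For sets $\mathfrak{K}_1,\mathfrak{K}_2\subseteq\mathrm{Prob}(n)$, $\mathfrak{K}_1\succ\mathfrak{K}_2$ means every $\mathbf{q}\in\mathfrak{K}_2$ is majorized by some $\mathbf{p}\in\mathfrak{K}_1$. Classical channel majorization $\mathcal{N}\succ\mathcal{M}$: there is a random permutation superchannel $\Theta$ with $\mathcal{M}=\Theta[\mathcal{N}]$, i.e. $\Theta[\mathcal{N}]=\mathcal{D}^{YZ\to Y}\circ(\mathcal{N}\otimes\mathrm{id}^Z)\circ\mathcal{S}^{X'\to XZ}$ for a finite classical system $Z$, classical channels $\mathcal{S},\mathcal{D}$, with $\mathcal{D}(\cdot\otimes\mathbf{e}_z)$ doubly stochastic for every $z$. *)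

theory Defs
  imports Complex_Main
begin

text \<open>Conventions: a vector in R^n is a function nat => real, only indices i < n matter
 (index i corresponds to the paper's index i+1).  A channel from an m-element system to an
 n-element system is a matrix A :: nat => nat => real with A y x the probability of output y
 on input x (y < n, x < m); its x-th column is the vector (\<lambda>y. A y x).\<close>

definition prob_vec :: "nat \<Rightarrow> (nat \<Rightarrow> real) \<Rightarrow> bool" where
  "prob_vec n p \<longleftrightarrow> (\<forall>i<n. 0 \<le> p i) \<and> (\<Sum>i<n. p i) = 1"

definition nonincreasing :: "nat \<Rightarrow> (nat \<Rightarrow> real) \<Rightarrow> bool" where
  "nonincreasing n p \<longleftrightarrow> (\<forall>i j. i \<le> j \<longrightarrow> j < n \<longrightarrow> p j \<le> p i)"

definition prob_vec_desc :: "nat \<Rightarrow> (nat \<Rightarrow> real) \<Rightarrow> bool" where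
  "prob_vec_desc n p \<longleftrightarrow> prob_vec n p \<and> nonincreasing n p"

definition col_stochastic :: "nat \<Rightarrow> nat \<Rightarrow> (nat \<Rightarrow> nat \<Rightarrow> real) \<Rightarrow> bool" where
  "col_stochastic n m A \<longleftrightarrow> (\<forall>x<m. prob_vec n (\<lambda>y. A y x))"

definition doubly_stochastic :: "nat \<Rightarrow> (nat \<Rightarrow> nat \<Rightarrow> real) \<Rightarrow> bool" where
  "doubly_stochastic n A \<longleftrightarrow> (\<forall>i<n. \<forall>j<n. 0 \<le> A i j) \<and>
     (\<forall>j<n. (\<Sum>i<n. A i j) = 1) \<and> (\<forall>i<n. (\<Sum>j<n. A i j) = 1)"

definition kyfan :: "nat \<Rightarrow> (nat \<Rightarrow> real) \<Rightarrow> nat \<Rightarrow> real" where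
  "kyfan n p k = Max {(\<Sum>i\<in>I. p i) | I. I \<subseteq> {..<n} \<and> card I = k}"

definition majorizes :: "nat \<Rightarrow> (nat \<Rightarrow> real) \<Rightarrow> (nat \<Rightarrow> real) \<Rightarrow> bool" where
  "majorizes n p q \<longleftrightarrow> (\<forall>k\<in>{1..n}. kyfan n q k \<le> kyfan n p k)"

definition conv_channel :: "nat \<Rightarrow> nat \<Rightarrow> (nat \<Rightarrow> nat \<Rightarrow> real) \<Rightarrow> (nat \<Rightarrow> real) set" where
  "conv_channel n m A = {(\<lambda>y. if y < n then (\<Sum>x<m. c x * A y x) else 0) | c. prob_vec m c}"

definition set_majorizes :: "nat \<Rightarrow> (nat \<Rightarrow> real) set \<Rightarrow> (nat \<Rightarrow> real) set \<Rightarrow> bool" where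
  "set_majorizes n K1 K2 \<longleftrightarrow> (\<forall>q\<in>K2. \<exists>p\<in>K1. majorizes n p q)"

text \<open>Classical channel majorization N \<succ> M: M = D o (N \<otimes> id_Z) o S, where Z has l elements,
 S : X' -> X Z is a channel (S x z w = probability of (x,z) given w), and
 D : Y Z -> Y is a channel with D(. \<otimes> e_z) = D z doubly stochastic for each z
 (D z y' y = probability of output y' given input (y,z)).\<close>
definition channel_majorizes ::
  "nat \<Rightarrow> nat \<Rightarrow> (nat \<Rightarrow> nat \<Rightarrow> real) \<Rightarrow> nat \<Rightarrow> (nat \<Rightarrow> nat \<Rightarrow> real) \<Rightarrow> bool" where
  "channel_majorizes n m N m' M \<longleftrightarrow>
    (\<exists>(l::nat) (S::nat \<Rightarrow> nat \<Rightarrow> nat \<Rightarrow> real) (D::nat \<Rightarrow> nat \<Rightarrow> nat \<Rightarrow> real).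
       (\<forall>w<m'. (\<forall>x<m. \<forall>z<l. 0 \<le> S x z w) \<and> (\<Sum>x<m. \<Sum>z<l. S x z w) = 1) \<and>
       (\<forall>z<l. doubly_stochastic n (D z)) \<and>
       (\<forall>w<m'. \<forall>y'<n. M y' w = (\<Sum>x<m. \<Sum>z<l. S x z w * (\<Sum>y<n. D z y' y * N y x))))"

end

theory Submission
  imports Defs
begin

text \<open>All columns are sorted, so Ky Fan norms are prefix sums and majorization is domination of
  prefix sums.  A doubly stochastic matrix can only lower the prefix sums of a sorted vector, which
  gives (1) \<Rightarrow> (3); conversely, by Hardy-Littlewood-Polya (via T-transforms moving mass from a
  larger to a smaller entry) each column of \<open>M\<close> is a doubly stochastic image of its \<open>S\<close>-mixture
  of columns of \<open>N\<close>, and letting \<open>Z\<close> remember the input gives (3) \<Rightarrow> (1).  Conditions (2) and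
  (3) differ only by convexity.  By Abel summation a sorted nonnegative weight is a nonnegative
  combination of prefix indicators, so (3) \<Rightarrow> (4); conversely (4) says that no nonnegative
  weighting of the prefix-sum gaps is negative on every column of \<open>N\<close>, and Gordan's theorem of
  the alternative, proved by Fourier-Motzkin elimination, yields the mixture required by (3).
  Condition (5) is (4) with the prefix weights rescaled by the prefix sums of \<open>q\<^sub>w\<close>.\<close>

section \<open>Sorted vectors and Ky Fan norms\<close>

lemma sum_lessThan_split:
  "(a::nat) \<le> b \<Longrightarrow> (\<Sum>i<b. f i) = (\<Sum>i<a. f i) + (\<Sum>i\<in>{a..<b}. f i)"
  using sum.atLeastLessThan_concat[of 0 a b f] by (simp add: atLeast0LessThan)

lemma nonincreasing_Suc_iff:
  "nonincreasing n p \<longleftrightarrow> (\<forall>i. Suc i < n \<longrightarrow> p (Suc i) \<le> p i)"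
proof
  assume step: "\<forall>i. Suc i < n \<longrightarrow> p (Suc i) \<le> p i"
  show "nonincreasing n p"
    unfolding nonincreasing_def
  proof (intro allI impI)
    fix i j :: nat assume ij: "i \<le> j" "j < n"
    show "p j \<le> p i"
      by (rule lift_Suc_antimono_le_ivl[where N = "{i. Suc i < n}"]) (use step ij in auto)
  qed
next
  assume "nonincreasing n p"
  then show "\<forall>i. Suc i < n \<longrightarrow> p (Suc i) \<le> p i"
    unfolding nonincreasing_def by (meson le_SucI order_refl)
qed

lemma nonincreasing_nonneg_combination:
  assumes "\<forall>x<m. nonincreasing n (\<lambda>y. F y x)" and "\<forall>x<m. 0 \<le> c x"
  shows "nonincreasing n (\<lambda>y. \<Sum>x<m. c x * F y x)"
  using assms by (auto simp: nonincreasing_def intro!: sum_mono mult_left_mono)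

lemma sum_weighted_le_prefix_sum:
  fixes p w :: "nat \<Rightarrow> real"
  assumes mono: "nonincreasing n p" and w: "\<forall>j<n. 0 \<le> w j \<and> w j \<le> 1"
    and ws: "(\<Sum>j<n. w j) = real k" and kn: "k \<le> n"
  shows "(\<Sum>j<n. w j * p j) \<le> (\<Sum>j<k. p j)"
proof (cases "k = 0")
  case True
  then have "\<forall>j\<in>{..<n}. w j = 0" using ws w sum_nonneg_eq_0_iff[of "{..<n}" w] by auto
  then show ?thesis using True by simp
next
  case False
  \<comment> \<open>compare with the threshold value \<open>c\<close>: \<open>w\<close> loses \<open>(1 - w j) * p j \<ge> (1 - w j) * c\<close> below \<open>k\<close>
      and gains at most \<open>w j * c\<close> from \<open>k\<close> on\<close>
  define c where "c = p (k - 1)"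
  have above: "\<forall>j<k. c \<le> p j" and below: "\<forall>j\<in>{k..<n}. p j \<le> c"
    using mono kn False by (auto simp: nonincreasing_def c_def)
  have "(\<Sum>j<n. w j * p j) = (\<Sum>j<k. w j * p j) + (\<Sum>j\<in>{k..<n}. w j * p j)"
    by (rule sum_lessThan_split[OF kn])
  also have "\<dots> \<le> (\<Sum>j<k. p j + (w j - 1) * c) + (\<Sum>j\<in>{k..<n}. w j * c)"
  proof (rule add_mono; rule sum_mono)
    fix j assume j: "j \<in> {..<k}"
    have "(w j - 1) * p j \<le> (w j - 1) * c"
      using above j w kn by (intro mult_left_mono_neg) auto
    then show "w j * p j \<le> p j + (w j - 1) * c" by (simp add: algebra_simps)
  next
    fix j assume "j \<in> {k..<n}"
    then show "w j * p j \<le> w j * c" using below w by (intro mult_left_mono) auto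
  qed
  also have "\<dots> = (\<Sum>j<k. p j) + c * ((\<Sum>j<k. w j) + (\<Sum>j\<in>{k..<n}. w j) - real k)"
    by (simp add: sum.distrib sum_distrib_left sum_distrib_right algebra_simps sum_subtractf)
  also have "(\<Sum>j<k. w j) + (\<Sum>j\<in>{k..<n}. w j) = (\<Sum>j<n. w j)"
    by (rule sum_lessThan_split[OF kn, symmetric])
  finally show ?thesis using ws by simp
qed

lemma kyfan_cong:
  assumes "\<And>i. i < n \<Longrightarrow> p i = q i"
  shows "kyfan n p k = kyfan n q k"
proof -
  have "(\<lambda>I. \<Sum>i\<in>I. p i) ` {I. I \<subseteq> {..<n} \<and> card I = k}
      = (\<lambda>I. \<Sum>i\<in>I. q i) ` {I. I \<subseteq> {..<n} \<and> card I = k}"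
    using assms by (intro image_cong refl sum.cong) auto
  then show ?thesis by (simp add: kyfan_def setcompr_eq_image)
qed

lemma majorizes_cong:
  assumes "\<And>i. i < n \<Longrightarrow> p i = p' i" and "\<And>i. i < n \<Longrightarrow> q i = q' i"
  shows "majorizes n p q \<longleftrightarrow> majorizes n p' q'"
  using kyfan_cong[of n p p'] kyfan_cong[of n q q'] assms by (simp add: majorizes_def)

lemma kyfan_nonincreasing:
  assumes "nonincreasing n p" and "k \<le> n"
  shows "kyfan n p k = (\<Sum>i<k. p i)"
proof -
  let ?S = "{(\<Sum>i\<in>I. p i) | I. I \<subseteq> {..<n} \<and> card I = k}"
  have "?S = (\<lambda>I. \<Sum>i\<in>I. p i) ` {I. I \<subseteq> {..<n} \<and> card I = k}" by auto
  moreover have "finite {I. I \<subseteq> {..<n} \<and> card I = k}"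
    by (rule finite_subset[of _ "Pow {..<n}"]) auto
  ultimately have fin: "finite ?S" by simp
  have mem: "(\<Sum>i<k. p i) \<in> ?S" using assms(2) by (intro CollectI exI[of _ "{..<k}"]) auto
  have le: "(\<Sum>i\<in>I. p i) \<le> (\<Sum>i<k. p i)" if I: "I \<subseteq> {..<n}" "card I = k" for I
  proof -
    have "(\<Sum>i\<in>I. p i) = (\<Sum>j<n. if j \<in> I then p j else 0)"
      using I by (simp add: sum.inter_restrict[symmetric] Int_absorb1)
    also have "\<dots> = (\<Sum>j<n. (if j \<in> I then 1 else 0) * p j)"
      by (intro sum.cong) auto
    also have "\<dots> \<le> (\<Sum>i<k. p i)"
      by (rule sum_weighted_le_prefix_sum[OF assms(1) _ _ assms(2)])
        (use I in \<open>auto simp: sum.If_cases Int_absorb1\<close>)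
    finally show ?thesis .
  qed
  show ?thesis unfolding kyfan_def
    by (rule Max_eqI[OF fin]) (use le mem in auto)
qed

lemma majorizes_nonincreasing_iff:
  assumes "nonincreasing n p" and "nonincreasing n q"
  shows "majorizes n p q \<longleftrightarrow> (\<forall>t\<le>n. (\<Sum>i<t. q i) \<le> (\<Sum>i<t. p i))"
proof -
  have kyfan: "kyfan n q t \<le> kyfan n p t \<longleftrightarrow> (\<Sum>i<t. q i) \<le> (\<Sum>i<t. p i)" if "t \<le> n" for t
    using assms that by (simp add: kyfan_nonincreasing)
  show ?thesis unfolding majorizes_def
  proof (intro iffI allI impI ballI)
    fix t assume "\<forall>k\<in>{1..n}. kyfan n q k \<le> kyfan n p k" and "t \<le> n"
    then show "(\<Sum>i<t. q i) \<le> (\<Sum>i<t. p i)" using kyfan by (cases "t = 0") auto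
  qed (use kyfan in auto)
qed

lemma majorizes_nonneg_combination:
  assumes "\<forall>w<m. nonincreasing n (P w)" and "\<forall>w<m. nonincreasing n (Q w)"
    and "\<forall>w<m. majorizes n (P w) (Q w)" and "\<forall>w<m. 0 \<le> c w"
  shows "majorizes n (\<lambda>y. \<Sum>w<m. c w * P w y) (\<lambda>y. \<Sum>w<m. c w * Q w y)"
proof -
  have "(\<Sum>i<t. \<Sum>w<m. c w * Q w i) \<le> (\<Sum>i<t. \<Sum>w<m. c w * P w i)" if "t \<le> n" for t
  proof -
    have "(\<Sum>i<t. \<Sum>w<m. c w * Q w i) = (\<Sum>w<m. c w * (\<Sum>i<t. Q w i))"
      by (simp add: sum_distrib_left sum.swap[of _ "{..<t}"])
    also have "\<dots> \<le> (\<Sum>w<m. c w * (\<Sum>i<t. P w i))"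
    proof (rule sum_mono, rule mult_left_mono)
      fix w assume "w \<in> {..<m}"
      then show "(\<Sum>i<t. Q w i) \<le> (\<Sum>i<t. P w i)" "0 \<le> c w"
        using assms that majorizes_nonincreasing_iff[of n "P w" "Q w"] by auto
    qed
    also have "\<dots> = (\<Sum>i<t. \<Sum>w<m. c w * P w i)"
      by (simp add: sum_distrib_left sum.swap[of _ "{..<t}"])
    finally show ?thesis .
  qed
  moreover have "nonincreasing n (\<lambda>y. \<Sum>w<m. c w * P w y)" "nonincreasing n (\<lambda>y. \<Sum>w<m. c w * Q w y)"
    using assms by (auto intro!: nonincreasing_nonneg_combination)
  ultimately show ?thesis by (simp add: majorizes_nonincreasing_iff)
qed

section \<open>Abel summation\<close>

lemma sum_tail_sums_mult:
  fixes a p :: "nat \<Rightarrow> real"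
  shows "(\<Sum>y<n. (\<Sum>k\<in>{y..<n}. a k) * p y) = (\<Sum>k<n. a k * (\<Sum>y<Suc k. p y))"
proof (induction n)
  case (Suc n)
  have "(\<Sum>y<Suc n. (\<Sum>k\<in>{y..<Suc n}. a k) * p y)
      = (\<Sum>y<Suc n. (\<Sum>k\<in>{y..<n}. a k) * p y + a n * p y)"
    by (rule sum.cong) (auto simp: algebra_simps)
  also have "\<dots> = (\<Sum>y<n. (\<Sum>k\<in>{y..<n}. a k) * p y) + a n * (\<Sum>y<Suc n. p y)"
    by (simp add: sum.distrib sum_distrib_left distrib_left)
  finally show ?case using Suc.IH by simp
qed simp

lemma nonincreasing_tail_sum_decomposition:
  fixes s :: "nat \<Rightarrow> real"
  assumes mono: "nonincreasing n s" and nonneg: "\<forall>i<n. 0 \<le> s i"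
  obtains a where "\<forall>k<n. 0 \<le> a k"
    and "\<And>p. (\<Sum>y<n. s y * p y) = (\<Sum>k<n. a k * (\<Sum>y<Suc k. p y))"
proof
  \<comment> \<open>\<open>s\<close> extended by \<open>0\<close> at \<open>n\<close>, so that \<open>s y\<close> is the tail sum of its consecutive decrements\<close>
  define s' where "s' k = (if k < n then s k else 0)" for k
  define a where "a k = s' k - s' (Suc k)" for k
  show "\<forall>k<n. 0 \<le> a k"
    using mono nonneg by (auto simp: a_def s'_def nonincreasing_def)
  have tail: "(\<Sum>k\<in>{y..<n}. a k) = s y" if "y < n" for y
  proof -
    have "(\<Sum>k\<in>{y..<n}. s' (Suc k) - s' k) = s' n - s' y"
      using that by (intro sum_Suc_diff') simp
    then show ?thesis using that by (simp add: a_def s'_def sum_subtractf)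
  qed
  fix p :: "nat \<Rightarrow> real"
  have "(\<Sum>y<n. s y * p y) = (\<Sum>y<n. (\<Sum>k\<in>{y..<n}. a k) * p y)"
    using tail by (intro sum.cong) auto
  also have "\<dots> = (\<Sum>k<n. a k * (\<Sum>y<Suc k. p y))" by (rule sum_tail_sums_mult)
  finally show "(\<Sum>y<n. s y * p y) = (\<Sum>k<n. a k * (\<Sum>y<Suc k. p y))" .
qed

lemma weighted_sum_le_of_prefix_sums_le:
  fixes s p q :: "nat \<Rightarrow> real"
  assumes "nonincreasing n s" and "\<forall>i<n. 0 \<le> s i"
    and prefix: "\<forall>t\<le>n. (\<Sum>i<t. q i) \<le> (\<Sum>i<t. p i)"
  shows "(\<Sum>y<n. s y * q y) \<le> (\<Sum>y<n. s y * p y)"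
proof -
  obtain a where a: "\<forall>k<n. 0 \<le> a k"
    and abel: "\<And>p. (\<Sum>y<n. s y * p y) = (\<Sum>k<n. a k * (\<Sum>y<Suc k. p y))"
    using nonincreasing_tail_sum_decomposition[OF assms(1,2)] by blast
  have "(\<Sum>k<n. a k * (\<Sum>y<Suc k. q y)) \<le> (\<Sum>k<n. a k * (\<Sum>y<Suc k. p y))"
  proof (rule sum_mono)
    fix k assume "k \<in> {..<n}"
    then show "a k * (\<Sum>y<Suc k. q y) \<le> a k * (\<Sum>y<Suc k. p y)"
      using a prefix[rule_format, of "Suc k"] by (intro mult_left_mono) auto
  qed
  then show ?thesis by (simp only: abel)
qed

lemma tail_sums_prob_vec_desc:
  fixes a :: "nat \<Rightarrow> real"
  assumes a: "\<forall>k<n. 0 \<le> a k" and Z: "0 < (\<Sum>k<n. a k * real (Suc k))"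
  shows "prob_vec_desc n (\<lambda>y. (\<Sum>k\<in>{y..<n}. a k) / (\<Sum>k<n. a k * real (Suc k)))"
proof -
  let ?Z = "\<Sum>k<n. a k * real (Suc k)"
  have "(\<Sum>y<n. (\<Sum>k\<in>{y..<n}. a k) / ?Z) = (\<Sum>y<n. (\<Sum>k\<in>{y..<n}. a k) * 1) / ?Z"
    by (simp add: sum_divide_distrib)
  also have "\<dots> = 1"
    using Z by (simp only: sum_tail_sums_mult) simp
  finally have "(\<Sum>y<n. (\<Sum>k\<in>{y..<n}. a k) / ?Z) = 1" .
  moreover have "(\<Sum>k\<in>{j..<n}. a k) \<le> (\<Sum>k\<in>{i..<n}. a k)" if "i \<le> j" for i j
    using that a by (intro sum_mono2) auto
  ultimately show ?thesis
    using a Z by (auto simp: prob_vec_desc_def prob_vec_def nonincreasing_def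
        intro!: sum_nonneg divide_nonneg_pos divide_right_mono)
qed

section \<open>Doubly stochastic matrices and the Hardy-Littlewood-Polya theorem\<close>

lemma doubly_stochastic_convex_comb:
  assumes "doubly_stochastic n A" and "doubly_stochastic n B" and "0 \<le> u" and "u \<le> 1"
  shows "doubly_stochastic n (\<lambda>i j. (1 - u) * A i j + u * B i j)"
  using assms by (simp add: doubly_stochastic_def sum.distrib sum_distrib_left[symmetric])

lemma doubly_stochastic_id: "doubly_stochastic n (\<lambda>i j. if i = j then 1 else 0)"
  by (simp add: doubly_stochastic_def)

lemma doubly_stochastic_permutation_matrix:
  assumes "bij_betw \<sigma> {..<n} {..<n}"
  shows "doubly_stochastic n (\<lambda>i j. if \<sigma> i = j then 1 else 0)"
proof -
  have "(\<Sum>i<n. if \<sigma> i = j then 1 else 0 :: real) = (\<Sum>i<n. if i = j then 1 else 0)" for j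
    using sum.reindex_bij_betw[OF assms, of "\<lambda>i. if i = j then 1 else 0 :: real"] by simp
  moreover have "\<sigma> i < n" if "i < n" for i
    using assms that by (auto dest: bij_betw_apply)
  ultimately show ?thesis by (simp add: doubly_stochastic_def)
qed

lemma doubly_stochastic_mult:
  assumes "doubly_stochastic n A" and "doubly_stochastic n B"
  shows "doubly_stochastic n (\<lambda>i j. \<Sum>l<n. A i l * B l j)"
proof -
  have "(\<Sum>i<n. \<Sum>l<n. A i l * B l j) = (\<Sum>l<n. (\<Sum>i<n. A i l) * B l j)" for j
    by (subst sum.swap) (simp add: sum_distrib_right)
  moreover have "(\<Sum>j<n. \<Sum>l<n. A i l * B l j) = (\<Sum>l<n. A i l * (\<Sum>j<n. B l j))" for i
    by (subst sum.swap) (simp add: sum_distrib_left)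
  ultimately show ?thesis
    using assms by (auto simp: doubly_stochastic_def intro!: sum_nonneg)
qed

lemma sum_matrix_mult_assoc:
  fixes A B :: "nat \<Rightarrow> nat \<Rightarrow> real"
  shows "(\<Sum>l<n. A i l * (\<Sum>j<n. B l j * r j)) = (\<Sum>j<n. (\<Sum>l<n. A i l * B l j) * r j)"
  by (simp add: sum_distrib_left sum_distrib_right mult.assoc) (rule sum.swap)

lemma doubly_stochastic_prefix_sum_le:
  assumes ds: "doubly_stochastic n D" and "nonincreasing n p" and "t \<le> n"
  shows "(\<Sum>i<t. \<Sum>j<n. D i j * p j) \<le> (\<Sum>j<t. p j)"
proof -
  have "(\<Sum>i<t. \<Sum>j<n. D i j * p j) = (\<Sum>j<n. (\<Sum>i<t. D i j) * p j)"
    by (subst sum.swap) (simp add: sum_distrib_right)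
  also have "\<dots> \<le> (\<Sum>j<t. p j)"
  proof (rule sum_weighted_le_prefix_sum[OF assms(2) _ _ assms(3)])
    show "\<forall>j<n. 0 \<le> (\<Sum>i<t. D i j) \<and> (\<Sum>i<t. D i j) \<le> 1"
    proof (intro allI impI conjI)
      fix j assume j: "j < n"
      show "0 \<le> (\<Sum>i<t. D i j)"
        using ds \<open>t \<le> n\<close> j by (auto simp: doubly_stochastic_def intro!: sum_nonneg)
      have "(\<Sum>i<t. D i j) \<le> (\<Sum>i<n. D i j)"
        using ds \<open>t \<le> n\<close> j by (intro sum_mono2) (auto simp: doubly_stochastic_def)
      then show "(\<Sum>i<t. D i j) \<le> 1" using ds j by (simp add: doubly_stochastic_def)
    qed
    have "(\<Sum>j<n. \<Sum>i<t. D i j) = (\<Sum>i<t. \<Sum>j<n. D i j)" by (rule sum.swap)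
    also have "\<dots> = real t" using ds \<open>t \<le> n\<close> by (simp add: doubly_stochastic_def)
    finally show "(\<Sum>j<n. \<Sum>i<t. D i j) = real t" .
  qed
  finally show ?thesis .
qed

lemma sum_lessThan_transfer:
  fixes r :: "nat \<Rightarrow> real"
  assumes "j \<noteq> k"
  shows "(\<Sum>i<t. (r(j := r j - \<delta>, k := r k + \<delta>)) i)
       = (\<Sum>i<t. r i) - (if j < t then \<delta> else 0) + (if k < t then \<delta> else 0)"
proof -
  have "(r(j := r j - \<delta>, k := r k + \<delta>)) i
      = r i - (if i = j then \<delta> else 0) + (if i = k then \<delta> else 0)" for i
    using assms by auto
  then show ?thesis by (simp add: sum.distrib sum_subtractf)
qed

lemma nonincreasing_transfer:
  fixes r q :: "nat \<Rightarrow> real"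
  assumes r: "nonincreasing n r" and q: "nonincreasing n q" and "j < k" and "k < n"
    and "0 \<le> \<delta>" and "q j \<le> r j - \<delta>" and "r k + \<delta> \<le> q k"
    and between: "\<forall>i. j < i \<and> i < k \<longrightarrow> r i = q i"
  shows "nonincreasing n (r(j := r j - \<delta>, k := r k + \<delta>))"
  unfolding nonincreasing_Suc_iff
proof (intro allI impI)
  fix i assume i: "Suc i < n"
  have r_step: "r (Suc i) \<le> r i" and q_step: "q (Suc i) \<le> q i"
    using r q i by (simp_all add: nonincreasing_Suc_iff)
  have "q k \<le> q i" if "i < k" using q that \<open>k < n\<close> by (simp add: nonincreasing_def)
  have "q k \<le> q j" using q \<open>j < k\<close> \<open>k < n\<close> by (simp add: nonincreasing_def)
  consider "Suc i = j" | "i = j" "Suc i = k" | "i = j" "Suc i < k" | "Suc i = k" "j < i"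
    | "i = k" | "i \<noteq> j" "i \<noteq> k" "Suc i \<noteq> j" "Suc i \<noteq> k"
    using \<open>j < k\<close> by linarith
  then show "(r(j := r j - \<delta>, k := r k + \<delta>)) (Suc i) \<le> (r(j := r j - \<delta>, k := r k + \<delta>)) i"
  proof cases
    case 1 then show ?thesis using r_step assms by auto
  next
    case 2 then show ?thesis using \<open>q k \<le> q j\<close> assms by auto
  next
    case 3 then show ?thesis using q_step between assms by auto
  next
    case 4 then show ?thesis using \<open>i < k \<Longrightarrow> q k \<le> q i\<close> between assms by auto
  next
    case 5 then show ?thesis using r_step assms by auto
  qed (use r_step in auto)
qed

lemma prefix_sums_le_transfer:
  fixes r q :: "nat \<Rightarrow> real"
  assumes prefix: "\<forall>t\<le>n. (\<Sum>i<t. q i) \<le> (\<Sum>i<t. r i)" and "j < k"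
    and "q j \<le> r j - \<delta>" and between: "\<forall>i. j < i \<and> i < k \<longrightarrow> r i = q i"
  shows "\<forall>t\<le>n. (\<Sum>i<t. q i) \<le> (\<Sum>i<t. (r(j := r j - \<delta>, k := r k + \<delta>)) i)"
proof (intro allI impI)
  fix t assume "t \<le> n"
  have transfer: "(\<Sum>i<t. (r(j := r j - \<delta>, k := r k + \<delta>)) i)
      = (\<Sum>i<t. r i) - (if j < t then \<delta> else 0) + (if k < t then \<delta> else 0)"
    using \<open>j < k\<close> by (intro sum_lessThan_transfer) simp
  consider "t \<le> j" | "k < t" | "j < t" "t \<le> k" by linarith
  then have "(\<Sum>i<t. q i) \<le> (\<Sum>i<t. r i) - (if j < t then \<delta> else 0) + (if k < t then \<delta> else 0)"
  proof cases
    case 3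
    have "(\<Sum>i<t. q i) = (\<Sum>i<j. q i) + q j + (\<Sum>i\<in>{Suc j..<t}. q i)"
      using sum_lessThan_split[of "Suc j" t q] 3 by simp
    also have "\<dots> \<le> (\<Sum>i<j. r i) + (r j - \<delta>) + (\<Sum>i\<in>{Suc j..<t}. r i)"
      using prefix \<open>t \<le> n\<close> 3 between assms(3) by (intro add_mono) auto
    also have "\<dots> = (\<Sum>i<t. r i) - \<delta>"
      using sum_lessThan_split[of "Suc j" t r] 3 by simp
    finally show ?thesis using 3 by simp
  qed (use prefix \<open>t \<le> n\<close> \<open>j < k\<close> in auto)
  then show "(\<Sum>i<t. q i) \<le> (\<Sum>i<t. (r(j := r j - \<delta>, k := r k + \<delta>)) i)"
    unfolding transfer .
qed

lemma transfer_doubly_stochastic: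
  fixes r :: "nat \<Rightarrow> real"
  assumes "j < n" and "k < n" and "j \<noteq> k" and "0 \<le> \<delta>" and "\<delta> \<le> r j - r k"
  shows "\<exists>D. doubly_stochastic n D \<and>
           (\<forall>i<n. (r(j := r j - \<delta>, k := r k + \<delta>)) i = (\<Sum>l<n. D i l * r l))"
proof -
  \<comment> \<open>if \<open>r j = r k\<close> then \<open>\<delta> = 0\<close>, and \<open>u = \<delta> / 0 = 0\<close> yields the identity, as required\<close>
  define u where "u = \<delta> / (r j - r k)"
  have u: "0 \<le> u" "u \<le> 1" "u * (r j - r k) = \<delta>"
    using assms by (auto simp: u_def divide_le_eq_1)
  define \<sigma> where "\<sigma> i = (if i = j then k else if i = k then j else i)" for i
  have "bij_betw \<sigma> {..<n} {..<n}"
    by (rule bij_betw_byWitness[where f' = \<sigma>]) (use assms in \<open>auto simp: \<sigma>_def\<close>)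
  then have P: "doubly_stochastic n (\<lambda>i l. if \<sigma> i = l then 1 else 0)"
    by (rule doubly_stochastic_permutation_matrix)
  define D where "D i l = (1 - u) * (if i = l then 1 else 0) + u * (if \<sigma> i = l then 1 else 0)"
    for i l :: nat
  have "doubly_stochastic n D"
    unfolding D_def using doubly_stochastic_convex_comb[OF doubly_stochastic_id P u(1,2)] by simp
  moreover have "(r(j := r j - \<delta>, k := r k + \<delta>)) i = (\<Sum>l<n. D i l * r l)" if "i < n" for i
  proof -
    have "(\<Sum>l<n. D i l * r l)
        = (\<Sum>l<n. (1 - u) * (if i = l then r l else 0) + u * (if \<sigma> i = l then r l else 0))"
      by (intro sum.cong) (auto simp: D_def algebra_simps)
    also have "\<dots> = (1 - u) * r i + u * r (\<sigma> i)"
      using that assms by (simp add: sum.distrib sum_distrib_left[symmetric] \<sigma>_def)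
    also have "\<dots> = (r(j := r j - \<delta>, k := r k + \<delta>)) i"
      using u(3) assms by (auto simp: \<sigma>_def algebra_simps)
    finally show ?thesis ..
  qed
  ultimately show ?thesis by blast
qed

lemma robin_hood_indices:
  fixes r q :: "nat \<Rightarrow> real"
  assumes prefix: "\<forall>t\<le>n. (\<Sum>i<t. q i) \<le> (\<Sum>i<t. r i)" and total: "(\<Sum>i<n. q i) = (\<Sum>i<n. r i)"
    and "\<exists>i<n. r i \<noteq> q i"
  obtains j k where "j < k" and "k < n" and "q j < r j" and "r k < q k"
    and "\<forall>i. j < i \<and> i < k \<longrightarrow> r i = q i"
proof -
  \<comment> \<open>\<open>j0\<close>: first disagreement, where \<open>r\<close> is larger; \<open>k\<close>: first later index where \<open>q\<close> is larger;
      \<open>j\<close>: last index before \<open>k\<close> where \<open>r\<close> is larger\<close>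
  define j0 where "j0 = (LEAST i. i < n \<and> r i \<noteq> q i)"
  have j0: "j0 < n" "r j0 \<noteq> q j0" using LeastI_ex[OF assms(3)] by (auto simp: j0_def)
  have "r i = q i" if "i < j0" for i
    using not_less_Least[of i "\<lambda>i. i < n \<and> r i \<noteq> q i"] that j0(1) by (auto simp: j0_def)
  then have same_prefix: "(\<Sum>i<j0. q i) = (\<Sum>i<j0. r i)" by (intro sum.cong) auto
  moreover have "(\<Sum>i<Suc j0. q i) \<le> (\<Sum>i<Suc j0. r i)"
    using prefix j0(1) by (simp del: sum.lessThan_Suc)
  ultimately have q_less_j0: "q j0 < r j0" using j0(2) by simp
  have k_exists: "\<exists>i. j0 < i \<and> i < n \<and> r i < q i"
  proof (rule ccontr)
    assume "\<not> ?thesis"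
    then have "(\<Sum>i\<in>{Suc j0..<n}. q i) \<le> (\<Sum>i\<in>{Suc j0..<n}. r i)"
      by (intro sum_mono) (meson Suc_le_eq atLeastLessThan_iff not_less)
    then have "(\<Sum>i<Suc j0. q i) + (\<Sum>i\<in>{Suc j0..<n}. q i)
        < (\<Sum>i<Suc j0. r i) + (\<Sum>i\<in>{Suc j0..<n}. r i)"
      using same_prefix q_less_j0 by simp
    then show False
      using total j0(1) sum_lessThan_split[of "Suc j0" n q] sum_lessThan_split[of "Suc j0" n r] by simp
  qed
  define k where "k = (LEAST i. j0 < i \<and> i < n \<and> r i < q i)"
  have k: "j0 < k" "k < n" "r k < q k" using LeastI_ex[OF k_exists] by (auto simp: k_def)
  have k_least: "k \<le> i" if "j0 < i" "i < n" "r i < q i" for i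
    using Least_le[of "\<lambda>i. j0 < i \<and> i < n \<and> r i < q i" i] that by (simp add: k_def)
  define j where "j = (GREATEST i. i < k \<and> q i < r i)"
  have j: "j < k" "q j < r j" and j0_le_j: "j0 \<le> j"
    using GreatestI_nat[of "\<lambda>i. i < k \<and> q i < r i" j0 k]
      Greatest_le_nat[of "\<lambda>i. i < k \<and> q i < r i" j0 k] k q_less_j0 by (auto simp: j_def)
  have "r i = q i" if "j < i" "i < k" for i
  proof -
    have "\<not> q i < r i"
      using Greatest_le_nat[of "\<lambda>i. i < k \<and> q i < r i" i k] that by (auto simp: j_def)
    moreover have "\<not> r i < q i" using k_least[of i] that j0_le_j k(2) by force
    ultimately show ?thesis by simp
  qed
  then show thesis using that j k by blast
qed

theorem hardy_littlewood_polya_nonincreasing: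
  fixes r q :: "nat \<Rightarrow> real"
  assumes "nonincreasing n r" and "nonincreasing n q"
    and "\<forall>t\<le>n. (\<Sum>i<t. q i) \<le> (\<Sum>i<t. r i)" and "(\<Sum>i<n. q i) = (\<Sum>i<n. r i)"
  shows "\<exists>D. doubly_stochastic n D \<and> (\<forall>i<n. q i = (\<Sum>j<n. D i j * r j))"
  using assms
proof (induction "card {i. i < n \<and> r i \<noteq> q i}" arbitrary: r rule: less_induct)
  case less
  note r = less.prems(1) and q = less.prems(2) and prefix = less.prems(3) and total = less.prems(4)
  show ?case
  proof (cases "\<exists>i<n. r i \<noteq> q i")
    case False
    have "(\<Sum>j<n. (if i = j then 1 else 0) * r j) = q i" if "i < n" for i
    proof -
      have "(\<Sum>j<n. (if i = j then 1 else 0) * r j) = (\<Sum>j<n. if i = j then r j else 0)"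
        by (intro sum.cong) auto
      then show ?thesis using False that by simp
    qed
    then show ?thesis using doubly_stochastic_id by (intro exI[of _ "\<lambda>i j. if i = j then 1 else 0"]) auto
  next
    case True
    obtain j k where jk: "j < k" "k < n" "q j < r j" "r k < q k"
      and between: "\<forall>i. j < i \<and> i < k \<longrightarrow> r i = q i"
      using robin_hood_indices[OF prefix total True] by blast
    define \<delta> where "\<delta> = min (r j - q j) (q k - r k)"
    define r' where "r' = r(j := r j - \<delta>, k := r k + \<delta>)"
    have \<delta>: "0 < \<delta>" "q j \<le> r j - \<delta>" "r k + \<delta> \<le> q k" using jk by (auto simp: \<delta>_def)
    have "q k \<le> q j" using q jk by (simp add: nonincreasing_def)
    have r'_mono: "nonincreasing n r'"
      unfolding r'_def by (rule nonincreasing_transfer[OF r q jk(1,2)]) (use \<delta> between in auto)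
    have r'_prefix: "\<forall>t\<le>n. (\<Sum>i<t. q i) \<le> (\<Sum>i<t. r' i)"
      unfolding r'_def by (rule prefix_sums_le_transfer[OF prefix jk(1) \<delta>(2) between])
    have "(\<Sum>i<n. r' i) = (\<Sum>i<n. r i)"
      using sum_lessThan_transfer[of j k r \<delta> n] jk by (simp add: r'_def)
    then have total': "(\<Sum>i<n. q i) = (\<Sum>i<n. r' i)" using total by simp
    have "{i. i < n \<and> r' i \<noteq> q i} \<subseteq> {i. i < n \<and> r i \<noteq> q i}"
      using jk by (auto simp: r'_def)
    moreover have "j \<notin> {i. i < n \<and> r' i \<noteq> q i} \<or> k \<notin> {i. i < n \<and> r' i \<noteq> q i}"
      using jk by (auto simp: r'_def \<delta>_def min_def)
    moreover have "j \<in> {i. i < n \<and> r i \<noteq> q i}" "k \<in> {i. i < n \<and> r i \<noteq> q i}"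
      using jk by auto
    ultimately have "card {i. i < n \<and> r' i \<noteq> q i} < card {i. i < n \<and> r i \<noteq> q i}"
      by (intro psubset_card_mono) auto
    then obtain D' where D': "doubly_stochastic n D'" "\<forall>i<n. q i = (\<Sum>l<n. D' i l * r' l)"
      using less.hyps[OF _ r'_mono q r'_prefix total'] by blast
    have "j < n" "j \<noteq> k" "0 \<le> \<delta>" "\<delta> \<le> r j - r k" using jk \<delta> \<open>q k \<le> q j\<close> by auto
    then obtain T where T: "doubly_stochastic n T" "\<forall>i<n. r' i = (\<Sum>l<n. T i l * r l)"
      using transfer_doubly_stochastic[of j n k \<delta> r] jk(2) unfolding r'_def by blast
    show ?thesis
    proof (intro exI[of _ "\<lambda>i j. \<Sum>l<n. D' i l * T l j"] conjI allI impI)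
      show "doubly_stochastic n (\<lambda>i j. \<Sum>l<n. D' i l * T l j)"
        by (rule doubly_stochastic_mult[OF D'(1) T(1)])
      fix i assume "i < n"
      then have "q i = (\<Sum>l<n. D' i l * (\<Sum>j<n. T l j * r j))"
        using D'(2) T(2) by (auto intro: sum.cong)
      then show "q i = (\<Sum>j<n. (\<Sum>l<n. D' i l * T l j) * r j)"
        by (simp only: sum_matrix_mult_assoc)
    qed
  qed
qed

section \<open>Gordan's theorem of the alternative\<close>

lemma finite_sets_strict_separation:
  fixes L U :: "real set"
  assumes "finite L" and "finite U" and sep: "\<And>l u. l \<in> L \<Longrightarrow> u \<in> U \<Longrightarrow> l < u"
  obtains t where "\<And>l. l \<in> L \<Longrightarrow> l < t" and "\<And>u. u \<in> U \<Longrightarrow> t < u"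
proof -
  consider "L = {}" "U = {}" | "L = {}" "U \<noteq> {}" | "L \<noteq> {}" "U = {}" | "L \<noteq> {}" "U \<noteq> {}"
    by blast
  then show thesis
  proof cases
    case 2
    have "\<And>u. u \<in> U \<Longrightarrow> Min U - 1 < u" using \<open>finite U\<close> by (smt (verit) Min_le)
    with 2 that show thesis by blast
  next
    case 3
    have "\<And>l. l \<in> L \<Longrightarrow> l < Max L + 1" using \<open>finite L\<close> by (smt (verit) Max_ge)
    with 3 that show thesis by blast
  next
    case 4
    then have "Max L < Min U" using assms by simp
    moreover have "\<And>l. l \<in> L \<Longrightarrow> l \<le> Max L" "\<And>u. u \<in> U \<Longrightarrow> Min U \<le> u"
      using assms by simp_all
    ultimately show thesis using that[of "(Max L + Min U) / 2"] by force
  qed (use that in blast)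
qed

text \<open>One step of Fourier-Motzkin elimination: every added combination vanishes at coordinate \<open>n\<close>.\<close>

definition fm_eliminate :: "nat \<Rightarrow> (nat \<Rightarrow> real) set \<Rightarrow> (nat \<Rightarrow> real) set" where
  "fm_eliminate n V = {v \<in> V. 0 \<le> v n} \<union>
     (\<lambda>(v, u) k. - u n * v k + v n * u k) ` ({v \<in> V. 0 \<le> v n} \<times> {u \<in> V. u n < 0})"

lemma finite_fm_eliminate: "finite V \<Longrightarrow> finite (fm_eliminate n V)"
  by (simp add: fm_eliminate_def)

lemma fm_eliminate_no_negative_functional:
  fixes V :: "(nat \<Rightarrow> real) set"
  assumes fin: "finite V"
    and H: "\<forall>a. (\<forall>k<Suc n. 0 \<le> a k) \<longrightarrow> (\<exists>v\<in>V. 0 \<le> (\<Sum>k<Suc n. a k * v k))"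
  shows "\<forall>a. (\<forall>k<n. 0 \<le> a k) \<longrightarrow> (\<exists>z\<in>fm_eliminate n V. 0 \<le> (\<Sum>k<n. a k * z k))"
proof (intro allI impI, rule ccontr)
  fix a :: "nat \<Rightarrow> real"
  assume a: "\<forall>k<n. 0 \<le> a k" and "\<not> (\<exists>z\<in>fm_eliminate n V. 0 \<le> (\<Sum>k<n. a k * z k))"
  define A where "A z = (\<Sum>k<n. a k * z k)" for z :: "nat \<Rightarrow> real"
  have neg: "A z < 0" if "z \<in> fm_eliminate n V" for z
    using that \<open>\<not> _\<close> by (auto simp: A_def not_le)
  define P where "P = {v \<in> V. 0 \<le> v n}"
  define Ng where "Ng = {u \<in> V. u n < 0}"
  have neg_P: "A v < 0" if "v \<in> P" for v
    using neg that by (auto simp: fm_eliminate_def P_def)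
  have neg_pair: "- u n * A v + v n * A u < 0" if "v \<in> P" "u \<in> Ng" for v u
  proof -
    have "(\<lambda>k. - u n * v k + v n * u k) \<in> fm_eliminate n V"
      using that by (force simp: fm_eliminate_def P_def Ng_def)
    then have "A (\<lambda>k. - u n * v k + v n * u k) < 0" by (rule neg)
    then show ?thesis
      by (simp add: A_def sum_distrib_left ring_distribs sum.distrib mult_ac sum_negf sum_subtractf)
  qed
  \<comment> \<open>extend \<open>a\<close> by a weight \<open>t \<ge> 0\<close> on coordinate \<open>n\<close> keeping every \<open>A v + t * v n\<close> negative\<close>
  let ?L = "insert 0 ((\<lambda>u. A u / - u n) ` Ng)" and ?U = "(\<lambda>v. - A v / v n) ` {v \<in> P. 0 < v n}"
  have "l < x" if "l \<in> ?L" and "x \<in> ?U" for l x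
  proof -
    obtain v where v: "v \<in> P" "0 < v n" "x = - A v / v n" using \<open>x \<in> ?U\<close> by auto
    have "0 < x" using neg_P[OF v(1)] v by (simp add: divide_neg_pos)
    moreover have "A u / - u n < - A v / v n" if "u \<in> Ng" for u
      using neg_pair[OF v(1) that] v(2) that by (simp add: Ng_def field_simps)
    ultimately show "l < x" using \<open>l \<in> ?L\<close> v(3) by auto
  qed
  moreover have "finite ?L" "finite ?U" using fin by (simp_all add: Ng_def P_def)
  ultimately obtain t where lower: "\<And>l. l \<in> ?L \<Longrightarrow> l < t" and upper: "\<And>x. x \<in> ?U \<Longrightarrow> t < x"
    using finite_sets_strict_separation[of ?L ?U] by blast
  have "\<forall>k<Suc n. 0 \<le> (a(n := t)) k" using a lower[of 0] by (simp add: less_Suc_eq)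
  then obtain v where "v \<in> V" and v: "0 \<le> (\<Sum>k<Suc n. (a(n := t)) k * v k)"
    using H by blast
  then have "0 \<le> A v + t * v n" by (simp add: A_def)
  consider "v \<in> Ng" | "v \<in> P" "v n = 0" | "v \<in> P" "0 < v n"
    using \<open>v \<in> V\<close> by (force simp: P_def Ng_def)
  then show False
  proof cases
    case 1
    then have "A v / - v n < t" using lower by blast
    then show False using 1 \<open>0 \<le> A v + t * v n\<close> by (simp add: Ng_def field_simps)
  next
    case 3
    then have "t < - A v / v n" using upper by blast
    then show False using 3 \<open>0 \<le> A v + t * v n\<close> by (simp add: field_simps)
  qed (use neg_P \<open>0 \<le> A v + t * v n\<close> in force)
qed

lemma fm_eliminate_as_combination:
  fixes V :: "(nat \<Rightarrow> real) set"
  assumes fin: "finite V" and "z \<in> fm_eliminate n V"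
  shows "\<exists>C. (\<forall>v\<in>V. 0 \<le> C v) \<and> 0 < (\<Sum>v\<in>V. C v) \<and>
           (\<forall>k<n. z k = (\<Sum>v\<in>V. C v * v k)) \<and> 0 \<le> (\<Sum>v\<in>V. C v * v n)"
  using assms(2) unfolding fm_eliminate_def
proof (elim UnE imageE SigmaE)
  assume z: "z \<in> {v \<in> V. 0 \<le> v n}"
  define C where "C w = (if w = z then 1 else 0 :: real)" for w
  have sum_C: "(\<Sum>w\<in>V. C w * g w) = g z" for g :: "(nat \<Rightarrow> real) \<Rightarrow> real"
  proof -
    have "(\<Sum>w\<in>V. C w * g w) = (\<Sum>w\<in>V. if w = z then g w else 0)"
      by (intro sum.cong) (auto simp: C_def)
    then show ?thesis using fin z by simp
  qed
  have "\<forall>v\<in>V. 0 \<le> C v" by (simp add: C_def)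
  then show ?thesis
    using sum_C[of "\<lambda>_. 1"] z by (intro exI[of _ C]) (simp add: sum_C)
next
  fix vu v u assume "vu = (v, u)" "v \<in> {v \<in> V. 0 \<le> v n}" "u \<in> {u \<in> V. u n < 0}"
    and z: "z = (case vu of (v, u) \<Rightarrow> \<lambda>k. - u n * v k + v n * u k)"
  then have v: "v \<in> V" "0 \<le> v n" and u: "u \<in> V" "u n < 0" and "v \<noteq> u" by auto
  define C where "C w = (if w = v then - u n else 0) + (if w = u then v n else 0)" for w
  have sum_C: "(\<Sum>w\<in>V. C w * g w) = - u n * g v + v n * g u" for g :: "(nat \<Rightarrow> real) \<Rightarrow> real"
  proof -
    have "(\<Sum>w\<in>V. C w * g w)
        = (\<Sum>w\<in>V. (if w = v then - u n * g w else 0) + (if w = u then v n * g w else 0))"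
      by (intro sum.cong) (auto simp: C_def algebra_simps)
    then show ?thesis using fin v u by (simp add: sum.distrib)
  qed
  have "\<forall>w\<in>V. 0 \<le> C w" using v u by (simp add: C_def)
  then show ?thesis
    using sum_C[of "\<lambda>_. 1"] sum_C[of "\<lambda>w. w n"] v u \<open>vu = (v, u)\<close> z
    by (intro exI[of _ C]) (simp add: sum_C)
qed

theorem gordan_alternative:
  fixes V :: "(nat \<Rightarrow> real) set"
  assumes "finite V"
    and "\<forall>a. (\<forall>k<n. 0 \<le> a k) \<longrightarrow> (\<exists>v\<in>V. 0 \<le> (\<Sum>k<n. a k * v k))"
  shows "\<exists>c. (\<forall>v\<in>V. 0 \<le> c v) \<and> 0 < (\<Sum>v\<in>V. c v) \<and> (\<forall>k<n. 0 \<le> (\<Sum>v\<in>V. c v * v k))"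
  using assms
proof (induction n arbitrary: V)
  case 0
  then have "V \<noteq> {}" by auto
  then show ?case using "0.prems"(1)
    by (intro exI[of _ "\<lambda>v. 1"]) (auto simp: card_gt_0_iff)
next
  case (Suc n)
  let ?V' = "fm_eliminate n V"
  obtain c' where c'_nonneg: "\<forall>z\<in>?V'. 0 \<le> c' z" and c'_pos: "0 < (\<Sum>z\<in>?V'. c' z)"
    and c'_coord: "\<forall>k<n. 0 \<le> (\<Sum>z\<in>?V'. c' z * z k)"
    using Suc.IH[OF finite_fm_eliminate fm_eliminate_no_negative_functional] Suc.prems by blast
  have "\<forall>z\<in>?V'. \<exists>C. (\<forall>v\<in>V. 0 \<le> C v) \<and> 0 < (\<Sum>v\<in>V. C v) \<and>
           (\<forall>k<n. z k = (\<Sum>v\<in>V. C v * v k)) \<and> 0 \<le> (\<Sum>v\<in>V. C v * v n)"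
    using fm_eliminate_as_combination[OF Suc.prems(1)] by blast
  then obtain C where C: "\<forall>z\<in>?V'. (\<forall>v\<in>V. 0 \<le> C z v) \<and> 0 < (\<Sum>v\<in>V. C z v) \<and>
           (\<forall>k<n. z k = (\<Sum>v\<in>V. C z v * v k)) \<and> 0 \<le> (\<Sum>v\<in>V. C z v * v n)"
    by (rule bchoice[THEN exE])
  then have C_nonneg: "\<forall>z\<in>?V'. \<forall>v\<in>V. 0 \<le> C z v"
    and C_pos: "\<forall>z\<in>?V'. 0 < (\<Sum>v\<in>V. C z v)"
    and C_coord: "\<forall>z\<in>?V'. \<forall>k<n. z k = (\<Sum>v\<in>V. C z v * v k)"
    and C_last: "\<forall>z\<in>?V'. 0 \<le> (\<Sum>v\<in>V. C z v * v n)"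
    by auto
  define c where "c v = (\<Sum>z\<in>?V'. c' z * C z v)" for v
  have swap: "(\<Sum>v\<in>V. c v * g v) = (\<Sum>z\<in>?V'. c' z * (\<Sum>v\<in>V. C z v * g v))"
    for g :: "(nat \<Rightarrow> real) \<Rightarrow> real"
    unfolding c_def by (simp add: sum_distrib_left sum_distrib_right mult.assoc) (rule sum.swap)
  have "0 < (\<Sum>v\<in>V. c v)"
  proof -
    have "\<exists>z\<in>?V'. 0 < c' z"
    proof (rule ccontr)
      assume "\<not> (\<exists>z\<in>?V'. 0 < c' z)"
      then have "(\<Sum>z\<in>?V'. c' z) \<le> 0" by (intro sum_nonpos) (auto simp: not_less)
      then show False using c'_pos by simp
    qed
    then obtain z0 where z0: "z0 \<in> ?V'" "0 < c' z0" by blast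
    have "0 < c' z0 * (\<Sum>v\<in>V. C z0 v)" using z0 C_pos by simp
    also have "\<dots> \<le> (\<Sum>z\<in>?V'. c' z * (\<Sum>v\<in>V. C z v))"
      using z0(1) c'_nonneg C_pos finite_fm_eliminate[OF Suc.prems(1)]
      by (intro member_le_sum) (auto intro: less_imp_le)
    also have "\<dots> = (\<Sum>v\<in>V. c v)" using swap[of "\<lambda>_. 1"] by simp
    finally show ?thesis .
  qed
  moreover have "0 \<le> (\<Sum>v\<in>V. c v * v k)" if "k < Suc n" for k
  proof (cases "k < n")
    case True
    then have "(\<Sum>v\<in>V. c v * v k) = (\<Sum>z\<in>?V'. c' z * z k)"
      unfolding swap using C_coord by (intro sum.cong) auto
    then show ?thesis using c'_coord True by simp
  next
    case False
    with that have "k = n" by simp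
    then show ?thesis
      using c'_nonneg C_last unfolding swap by (auto intro!: sum_nonneg)
  qed
  moreover have "\<forall>v\<in>V. 0 \<le> c v"
    using c'_nonneg C_nonneg by (auto simp: c_def intro!: sum_nonneg)
  ultimately show ?case by blast
qed

corollary gordan_alternative_indexed:
  fixes f :: "'a \<Rightarrow> nat \<Rightarrow> real"
  assumes fin: "finite X"
    and H: "\<forall>a. (\<forall>k<n. 0 \<le> a k) \<longrightarrow> (\<exists>x\<in>X. 0 \<le> (\<Sum>k<n. a k * f x k))"
  shows "\<exists>c. (\<forall>x\<in>X. 0 \<le> c x) \<and> (\<Sum>x\<in>X. c x) = 1 \<and> (\<forall>k<n. 0 \<le> (\<Sum>x\<in>X. c x * f x k))"
proof -
  obtain c0 where c0_nonneg: "\<forall>v\<in>f ` X. 0 \<le> c0 v" and c0_pos: "0 < (\<Sum>v\<in>f ` X. c0 v)"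
    and c0_coord: "\<forall>k<n. 0 \<le> (\<Sum>v\<in>f ` X. c0 v * v k)"
    using gordan_alternative[of "f ` X" n] fin H by auto
  \<comment> \<open>spread the weight of each vector evenly over the indices carrying it\<close>
  define cnt where "cnt v = card {x \<in> X. f x = v}" for v
  define d where "d x = c0 (f x) / real (cnt (f x))" for x
  have sum_d: "(\<Sum>x\<in>X. d x * g (f x)) = (\<Sum>v\<in>f ` X. c0 v * g v)" for g :: "(nat \<Rightarrow> real) \<Rightarrow> real"
  proof -
    have "(\<Sum>x\<in>X. d x * g (f x)) = (\<Sum>v\<in>f ` X. \<Sum>x\<in>{x \<in> X. f x = v}. d x * g (f x))"
      by (rule sum.image_gen[OF fin])
    also have "\<dots> = (\<Sum>v\<in>f ` X. c0 v * g v)"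
    proof (rule sum.cong[OF refl])
      fix v assume "v \<in> f ` X"
      then have "0 < cnt v" using fin by (auto simp: cnt_def card_gt_0_iff)
      have "(\<Sum>x\<in>{x \<in> X. f x = v}. d x * g (f x)) = real (cnt v) * (c0 v / real (cnt v) * g v)"
        by (simp add: d_def cnt_def)
      also have "\<dots> = c0 v * g v" using \<open>0 < cnt v\<close> by simp
      finally show "(\<Sum>x\<in>{x \<in> X. f x = v}. d x * g (f x)) = c0 v * g v" .
    qed
    finally show ?thesis .
  qed
  define T where "T = (\<Sum>v\<in>f ` X. c0 v)"
  have "(\<Sum>x\<in>X. d x) = T" using sum_d[of "\<lambda>_. 1"] by (simp add: T_def)
  moreover have "\<forall>k<n. 0 \<le> (\<Sum>x\<in>X. d x * f x k)" using sum_d[of "\<lambda>v. v k" for k] c0_coord by simp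
  moreover have "\<forall>x\<in>X. 0 \<le> d x" using c0_nonneg by (auto simp: d_def)
  moreover have "0 < T" using c0_pos by (simp add: T_def)
  ultimately show ?thesis
  proof (intro exI[of _ "\<lambda>x. d x / T"] conjI)
    assume "(\<Sum>x\<in>X. d x) = T" and "0 < T"
    then show "(\<Sum>x\<in>X. d x / T) = 1" by (simp add: sum_divide_distrib[symmetric])
  next
    assume "\<forall>k<n. 0 \<le> (\<Sum>x\<in>X. d x * f x k)" and "0 < T"
    then show "\<forall>k<n. 0 \<le> (\<Sum>x\<in>X. d x / T * f x k)"
      by (simp add: sum_divide_distrib[symmetric])
  qed simp
qed

section \<open>The equivalent conditions\<close>

definition mix_majorizes ::
  "nat \<Rightarrow> nat \<Rightarrow> (nat \<Rightarrow> nat \<Rightarrow> real) \<Rightarrow> nat \<Rightarrow> (nat \<Rightarrow> nat \<Rightarrow> real) \<Rightarrow> bool" where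
  "mix_majorizes n m N m' M \<longleftrightarrow> (\<exists>S. col_stochastic m m' S \<and>
     (\<forall>w<m'. majorizes n (\<lambda>y. \<Sum>x<m. S x w * N y x) (\<lambda>y. M y w)))"

definition desc_payoff_dominates ::
  "nat \<Rightarrow> nat \<Rightarrow> (nat \<Rightarrow> nat \<Rightarrow> real) \<Rightarrow> nat \<Rightarrow> (nat \<Rightarrow> nat \<Rightarrow> real) \<Rightarrow> bool" where
  "desc_payoff_dominates n m N m' M \<longleftrightarrow> (\<forall>s. prob_vec_desc n s \<longrightarrow>
     Max ((\<lambda>w. \<Sum>y<n. s y * M y w) ` {..<m'}) \<le> Max ((\<lambda>x. \<Sum>y<n. s y * N y x) ` {..<m}))"

definition kyfan_ratio_dominates ::
  "nat \<Rightarrow> nat \<Rightarrow> (nat \<Rightarrow> nat \<Rightarrow> real) \<Rightarrow> nat \<Rightarrow> (nat \<Rightarrow> nat \<Rightarrow> real) \<Rightarrow> bool" where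
  "kyfan_ratio_dominates n m N m' M \<longleftrightarrow> (\<forall>t. prob_vec n t \<longrightarrow> (\<forall>w<m'.
     1 \<le> Max ((\<lambda>x. \<Sum>k<n. t k * (kyfan n (\<lambda>y. N y x) (Suc k) / kyfan n (\<lambda>y. M y w) (Suc k)))
              ` {..<m})))"

lemma Max_image_lessThan_obtain:
  fixes f :: "nat \<Rightarrow> 'a::linorder"
  assumes "0 < m"
  obtains x where "x < m" and "Max (f ` {..<m}) = f x"
proof -
  have "Max (f ` {..<m}) \<in> f ` {..<m}" using assms by (intro Max_in) auto
  then show thesis using that by auto
qed

lemma mix_majorizes_columns:
  assumes "mix_majorizes n m N m' M"
    and nN: "\<forall>x<m. nonincreasing n (\<lambda>y. N y x)" and nM: "\<forall>w<m'. nonincreasing n (\<lambda>y. M y w)"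
  obtains S where "col_stochastic m m' S" and "\<forall>w<m'. \<forall>x<m. 0 \<le> S x w"
    and "\<forall>w<m'. nonincreasing n (\<lambda>y. \<Sum>x<m. S x w * N y x)"
    and "\<forall>w<m'. \<forall>t\<le>n. (\<Sum>y<t. M y w) \<le> (\<Sum>y<t. \<Sum>x<m. S x w * N y x)"
proof -
  obtain S where S: "col_stochastic m m' S"
    and maj: "\<forall>w<m'. majorizes n (\<lambda>y. \<Sum>x<m. S x w * N y x) (\<lambda>y. M y w)"
    using assms(1) by (auto simp: mix_majorizes_def)
  have S_nonneg: "\<forall>w<m'. \<forall>x<m. 0 \<le> S x w" using S by (simp add: col_stochastic_def prob_vec_def)
  then have sorted: "\<forall>w<m'. nonincreasing n (\<lambda>y. \<Sum>x<m. S x w * N y x)"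
    using nN by (simp add: nonincreasing_nonneg_combination)
  then have "\<forall>w<m'. \<forall>t\<le>n. (\<Sum>y<t. M y w) \<le> (\<Sum>y<t. \<Sum>x<m. S x w * N y x)"
    using maj nM majorizes_nonincreasing_iff by blast
  then show thesis using that S S_nonneg sorted by blast
qed

lemma channel_majorizes_imp_mix_majorizes:
  assumes "channel_majorizes n m N m' M"
    and nN: "\<forall>x<m. nonincreasing n (\<lambda>y. N y x)" and nM: "\<forall>w<m'. nonincreasing n (\<lambda>y. M y w)"
  shows "mix_majorizes n m N m' M"
proof -
  obtain l :: nat and S :: "nat \<Rightarrow> nat \<Rightarrow> nat \<Rightarrow> real" and D :: "nat \<Rightarrow> nat \<Rightarrow> nat \<Rightarrow> real"
    where S: "\<forall>w<m'. (\<forall>x<m. \<forall>z<l. 0 \<le> S x z w) \<and> (\<Sum>x<m. \<Sum>z<l. S x z w) = 1"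
    and D: "\<forall>z<l. doubly_stochastic n (D z)"
    and M: "\<forall>w<m'. \<forall>y'<n. M y' w = (\<Sum>x<m. \<Sum>z<l. S x z w * (\<Sum>y<n. D z y' y * N y x))"
    using assms(1) unfolding channel_majorizes_def by blast
  \<comment> \<open>forget the classical memory \<open>z\<close>: each \<open>D z\<close> can only lower the prefix sums of a column of \<open>N\<close>\<close>
  define S' where "S' x w = (\<Sum>z<l. S x z w)" for x w
  have "col_stochastic m m' S'"
    using S by (auto simp: col_stochastic_def prob_vec_def S'_def intro!: sum_nonneg)
  moreover have "majorizes n (\<lambda>y. \<Sum>x<m. S' x w * N y x) (\<lambda>y. M y w)" if w: "w < m'" for w
  proof -
    have "(\<Sum>y<t. M y w) \<le> (\<Sum>y<t. \<Sum>x<m. S' x w * N y x)" if t: "t \<le> n" for t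
    proof -
      have "(\<Sum>y<t. M y w) = (\<Sum>y<t. \<Sum>x<m. \<Sum>z<l. S x z w * (\<Sum>j<n. D z y j * N j x))"
        using M w t by (intro sum.cong) auto
      also have "\<dots> = (\<Sum>x<m. \<Sum>z<l. S x z w * (\<Sum>y<t. \<Sum>j<n. D z y j * N j x))"
        by (simp add: sum_distrib_left sum.swap[of _ "{..<t}"])
      also have "\<dots> \<le> (\<Sum>x<m. \<Sum>z<l. S x z w * (\<Sum>y<t. N y x))"
      proof (rule sum_mono, rule sum_mono, rule mult_left_mono)
        fix x z assume "x \<in> {..<m}" and "z \<in> {..<l}"
        then show "(\<Sum>y<t. \<Sum>j<n. D z y j * N j x) \<le> (\<Sum>y<t. N y x)" and "0 \<le> S x z w"
          using doubly_stochastic_prefix_sum_le[of n "D z" "\<lambda>y. N y x" t] D nN S w t by auto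
      qed
      also have "\<dots> = (\<Sum>y<t. \<Sum>x<m. S' x w * N y x)"
        by (simp add: S'_def sum_distrib_left sum_distrib_right sum.swap[of _ "{..<t}"])
      finally show ?thesis .
    qed
    moreover have "nonincreasing n (\<lambda>y. \<Sum>x<m. S' x w * N y x)"
      using S nN w by (auto simp: S'_def intro!: nonincreasing_nonneg_combination sum_nonneg)
    ultimately show ?thesis using nM w by (simp add: majorizes_nonincreasing_iff)
  qed
  ultimately show ?thesis unfolding mix_majorizes_def by blast
qed

lemma mix_majorizes_imp_channel_majorizes:
  assumes "mix_majorizes n m N m' M"
    and cN: "col_stochastic n m N" and cM: "col_stochastic n m' M"
    and nN: "\<forall>x<m. nonincreasing n (\<lambda>y. N y x)" and nM: "\<forall>w<m'. nonincreasing n (\<lambda>y. M y w)"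
  shows "channel_majorizes n m N m' M"
proof -
  obtain S where S: "col_stochastic m m' S" and S_nonneg: "\<forall>w<m'. \<forall>x<m. 0 \<le> S x w"
    and sorted: "\<forall>w<m'. nonincreasing n (\<lambda>y. \<Sum>x<m. S x w * N y x)"
    and prefix: "\<forall>w<m'. \<forall>t\<le>n. (\<Sum>y<t. M y w) \<le> (\<Sum>y<t. \<Sum>x<m. S x w * N y x)"
    by (rule mix_majorizes_columns[OF assms(1) nN nM])
  have "\<exists>D. doubly_stochastic n D \<and> (\<forall>y<n. M y w = (\<Sum>j<n. D y j * (\<Sum>x<m. S x w * N j x)))"
    if w: "w < m'" for w
  proof (rule hardy_littlewood_polya_nonincreasing)
    have "(\<Sum>y<n. \<Sum>x<m. S x w * N y x) = (\<Sum>x<m. S x w * (\<Sum>y<n. N y x))"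
      by (simp add: sum_distrib_left sum.swap[of _ "{..<n}"])
    also have "\<dots> = 1"
      using cN S w by (simp add: col_stochastic_def prob_vec_def)
    finally show "(\<Sum>y<n. M y w) = (\<Sum>y<n. \<Sum>x<m. S x w * N y x)"
      using cM w by (simp add: col_stochastic_def prob_vec_def)
  qed (use sorted nM prefix w in auto)
  then obtain D where D: "\<forall>w<m'. doubly_stochastic n (D w) \<and>
      (\<forall>y<n. M y w = (\<Sum>j<n. D w y j * (\<Sum>x<m. S x w * N j x)))"
    by metis
  \<comment> \<open>the memory \<open>z\<close> simply remembers the input \<open>w\<close>\<close>
  define S' where "S' x z w = (if z = w then S x w else 0)" for x z w :: nat
  have "\<forall>w<m'. (\<forall>x<m. \<forall>z<m'. 0 \<le> S' x z w) \<and> (\<Sum>x<m. \<Sum>z<m'. S' x z w) = 1"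
    using S S_nonneg by (simp add: S'_def col_stochastic_def prob_vec_def)
  moreover have "M y' w = (\<Sum>x<m. \<Sum>z<m'. S' x z w * (\<Sum>y<n. D z y' y * N y x))"
    if "w < m'" and "y' < n" for w y'
  proof -
    have "(\<Sum>z<m'. S' x z w * (\<Sum>y<n. D z y' y * N y x)) = S x w * (\<Sum>y<n. D w y' y * N y x)"
      for x
    proof -
      have "(\<Sum>z<m'. S' x z w * (\<Sum>y<n. D z y' y * N y x))
          = (\<Sum>z<m'. if z = w then S x w * (\<Sum>y<n. D z y' y * N y x) else 0)"
        by (intro sum.cong) (auto simp: S'_def)
      then show ?thesis using \<open>w < m'\<close> by simp
    qed
    then have "(\<Sum>x<m. \<Sum>z<m'. S' x z w * (\<Sum>y<n. D z y' y * N y x))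
        = (\<Sum>x<m. S x w * (\<Sum>y<n. D w y' y * N y x))"
      by simp
    also have "\<dots> = (\<Sum>y<n. D w y' y * (\<Sum>x<m. S x w * N y x))"
      by (simp add: sum_distrib_left sum.swap[of _ "{..<m}"] mult.left_commute)
    also have "\<dots> = M y' w" using D that by simp
    finally show ?thesis ..
  qed
  ultimately show ?thesis
    unfolding channel_majorizes_def using D by blast
qed

lemma set_majorizes_conv_channel_iff:
  "set_majorizes n (conv_channel n m N) (conv_channel n m' M) \<longleftrightarrow>
    (\<forall>c. prob_vec m' c \<longrightarrow> (\<exists>a. prob_vec m a \<and>
       majorizes n (\<lambda>y. \<Sum>x<m. a x * N y x) (\<lambda>y. \<Sum>w<m'. c w * M y w)))"
proof -
  have "majorizes n (\<lambda>y. if y < n then \<Sum>x<m. a x * N y x else 0)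
                    (\<lambda>y. if y < n then \<Sum>w<m'. c w * M y w else 0)
    \<longleftrightarrow> majorizes n (\<lambda>y. \<Sum>x<m. a x * N y x) (\<lambda>y. \<Sum>w<m'. c w * M y w)" for a c
    by (rule majorizes_cong) auto
  then show ?thesis
    unfolding set_majorizes_def conv_channel_def by blast
qed

lemma set_majorizes_imp_mix_majorizes:
  assumes "set_majorizes n (conv_channel n m N) (conv_channel n m' M)"
  shows "mix_majorizes n m N m' M"
proof -
  have "\<exists>a. prob_vec m a \<and> majorizes n (\<lambda>y. \<Sum>x<m. a x * N y x) (\<lambda>y. M y w)" if "w < m'" for w
  proof -
    define e where "e w' = (if w' = w then 1 else 0 :: real)" for w'
    have "prob_vec m' e" using that by (simp add: prob_vec_def e_def)
    then obtain a where "prob_vec m a"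
      and "majorizes n (\<lambda>y. \<Sum>x<m. a x * N y x) (\<lambda>y. \<Sum>w'<m'. e w' * M y w')"
      using assms unfolding set_majorizes_conv_channel_iff by blast
    moreover have "(\<lambda>y. \<Sum>w'<m'. e w' * M y w') = (\<lambda>y. M y w)"
    proof
      fix y
      have "(\<Sum>w'<m'. e w' * M y w') = (\<Sum>w'<m'. if w' = w then M y w' else 0)"
        by (intro sum.cong) (auto simp: e_def)
      then show "(\<Sum>w'<m'. e w' * M y w') = M y w" using that by simp
    qed
    ultimately show ?thesis by auto
  qed
  then obtain a where "\<forall>w<m'. prob_vec m (a w) \<and>
      majorizes n (\<lambda>y. \<Sum>x<m. a w x * N y x) (\<lambda>y. M y w)"
    by metis
  then show ?thesis
    unfolding mix_majorizes_def col_stochastic_def by (intro exI[of _ "\<lambda>x w. a w x"]) simp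
qed

lemma mix_majorizes_imp_set_majorizes:
  assumes "mix_majorizes n m N m' M"
    and nN: "\<forall>x<m. nonincreasing n (\<lambda>y. N y x)" and nM: "\<forall>w<m'. nonincreasing n (\<lambda>y. M y w)"
  shows "set_majorizes n (conv_channel n m N) (conv_channel n m' M)"
  unfolding set_majorizes_conv_channel_iff
proof (intro allI impI)
  fix c assume c: "prob_vec m' c"
  obtain S where S: "col_stochastic m m' S" and S_nonneg: "\<forall>w<m'. \<forall>x<m. 0 \<le> S x w"
    and sorted: "\<forall>w<m'. nonincreasing n (\<lambda>y. \<Sum>x<m. S x w * N y x)"
    and prefix: "\<forall>w<m'. \<forall>t\<le>n. (\<Sum>y<t. M y w) \<le> (\<Sum>y<t. \<Sum>x<m. S x w * N y x)"
    by (rule mix_majorizes_columns[OF assms])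
  define a where "a x = (\<Sum>w<m'. c w * S x w)" for x
  have "prob_vec m a"
  proof -
    have "(\<Sum>x<m. a x) = (\<Sum>w<m'. c w * (\<Sum>x<m. S x w))"
      by (simp add: a_def sum_distrib_left sum.swap[of _ "{..<m}"])
    also have "\<dots> = 1" using S c by (simp add: col_stochastic_def prob_vec_def)
    finally show ?thesis
      using c S_nonneg by (auto simp: prob_vec_def a_def intro!: sum_nonneg)
  qed
  moreover have "majorizes n (\<lambda>y. \<Sum>w<m'. c w * (\<Sum>x<m. S x w * N y x)) (\<lambda>y. \<Sum>w<m'. c w * M y w)"
    using c sorted nM prefix majorizes_nonincreasing_iff
    by (intro majorizes_nonneg_combination) (auto simp: prob_vec_def)
  moreover have "(\<Sum>w<m'. c w * (\<Sum>x<m. S x w * N y x)) = (\<Sum>x<m. a x * N y x)" for y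
    by (simp add: a_def sum_distrib_left sum_distrib_right sum.swap[of _ "{..<m}"] mult.assoc)
  ultimately show "\<exists>a. prob_vec m a \<and>
      majorizes n (\<lambda>y. \<Sum>x<m. a x * N y x) (\<lambda>y. \<Sum>w<m'. c w * M y w)"
    by auto
qed

lemma mix_majorizes_imp_desc_payoff_dominates:
  assumes "mix_majorizes n m N m' M" and "0 < m'"
    and nN: "\<forall>x<m. nonincreasing n (\<lambda>y. N y x)" and nM: "\<forall>w<m'. nonincreasing n (\<lambda>y. M y w)"
  shows "desc_payoff_dominates n m N m' M"
  unfolding desc_payoff_dominates_def
proof (intro allI impI)
  fix s assume s: "prob_vec_desc n s"
  obtain S where S: "col_stochastic m m' S" and S_nonneg: "\<forall>w<m'. \<forall>x<m. 0 \<le> S x w"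
    and "\<forall>w<m'. nonincreasing n (\<lambda>y. \<Sum>x<m. S x w * N y x)"
    and prefix: "\<forall>w<m'. \<forall>t\<le>n. (\<Sum>y<t. M y w) \<le> (\<Sum>y<t. \<Sum>x<m. S x w * N y x)"
    by (rule mix_majorizes_columns[OF assms(1) nN nM])
  let ?max = "Max ((\<lambda>x. \<Sum>y<n. s y * N y x) ` {..<m})"
  have "(\<Sum>y<n. s y * M y w) \<le> ?max" if w: "w < m'" for w
  proof -
    have "(\<Sum>y<n. s y * M y w) \<le> (\<Sum>y<n. s y * (\<Sum>x<m. S x w * N y x))"
      using s prefix w
      by (intro weighted_sum_le_of_prefix_sums_le) (auto simp: prob_vec_desc_def prob_vec_def)
    also have "\<dots> = (\<Sum>x<m. S x w * (\<Sum>y<n. s y * N y x))"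
      by (simp add: sum_distrib_left sum.swap[of _ "{..<m}"] mult.left_commute)
    also have "\<dots> \<le> (\<Sum>x<m. S x w * ?max)"
    proof (rule sum_mono, rule mult_left_mono)
      fix x assume "x \<in> {..<m}"
      then show "(\<Sum>y<n. s y * N y x) \<le> ?max" and "0 \<le> S x w"
        using S_nonneg w by (auto intro: Max_ge)
    qed
    also have "\<dots> = ?max"
      using S w by (simp add: col_stochastic_def prob_vec_def sum_distrib_right[symmetric])
    finally show ?thesis .
  qed
  then show "Max ((\<lambda>w. \<Sum>y<n. s y * M y w) ` {..<m'}) \<le> ?max"
    using \<open>0 < m'\<close> by (subst Max_le_iff) auto
qed

lemma desc_payoff_dominates_prefix_sums:
  assumes dom: "desc_payoff_dominates n m N m' M" and "0 < m" and "w < m'"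
    and a: "\<forall>k<n. 0 \<le> a k"
  shows "\<exists>x<m. (\<Sum>k<n. a k * (\<Sum>y<Suc k. M y w)) \<le> (\<Sum>k<n. a k * (\<Sum>y<Suc k. N y x))"
proof (cases "\<forall>k<n. a k = 0")
  case True
  then show ?thesis using \<open>0 < m\<close> by (intro exI[of _ 0]) simp
next
  case False
  \<comment> \<open>the weight \<open>a\<close> on prefix sums is the payoff of the normalized tail sums of \<open>a\<close>\<close>
  define Z where "Z = (\<Sum>k<n. a k * real (Suc k))"
  define s where "s y = (\<Sum>k\<in>{y..<n}. a k) / Z" for y
  obtain k0 where "k0 < n" "0 < a k0" using False a by force
  then have "0 < a k0 * real (Suc k0)" by simp
  also have "\<dots> \<le> Z" unfolding Z_def using \<open>k0 < n\<close> a by (intro member_le_sum) auto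
  finally have "0 < Z" .
  have s_prefix: "(\<Sum>y<n. s y * p y) = (\<Sum>k<n. a k * (\<Sum>y<Suc k. p y)) / Z" for p
    by (simp add: s_def sum_divide_distrib[symmetric] sum_tail_sums_mult)
  have "prob_vec_desc n s"
    unfolding s_def Z_def using tail_sums_prob_vec_desc a \<open>0 < Z\<close> Z_def by blast
  obtain x where "x < m" and x: "Max ((\<lambda>x. \<Sum>y<n. s y * N y x) ` {..<m}) = (\<Sum>y<n. s y * N y x)"
    by (rule Max_image_lessThan_obtain[OF \<open>0 < m\<close>])
  have "(\<Sum>y<n. s y * M y w) \<le> Max ((\<lambda>w. \<Sum>y<n. s y * M y w) ` {..<m'})"
    using \<open>w < m'\<close> by (intro Max_ge) auto
  also have "\<dots> \<le> Max ((\<lambda>x. \<Sum>y<n. s y * N y x) ` {..<m})"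
    using dom \<open>prob_vec_desc n s\<close> unfolding desc_payoff_dominates_def by blast
  also have "\<dots> = (\<Sum>y<n. s y * N y x)" by (rule x)
  finally show ?thesis
    using \<open>x < m\<close> \<open>0 < Z\<close> by (auto simp: s_prefix divide_le_cancel)
qed

lemma desc_payoff_dominates_imp_mix_majorizes:
  assumes dom: "desc_payoff_dominates n m N m' M" and "0 < m"
    and nN: "\<forall>x<m. nonincreasing n (\<lambda>y. N y x)" and nM: "\<forall>w<m'. nonincreasing n (\<lambda>y. M y w)"
  shows "mix_majorizes n m N m' M"
proof -
  have "\<exists>c. prob_vec m c \<and> majorizes n (\<lambda>y. \<Sum>x<m. c x * N y x) (\<lambda>y. M y w)" if w: "w < m'" for w
  proof -
    \<comment> \<open>Gordan's alternative, applied to the prefix-sum gaps \<open>f x k\<close> between column \<open>x\<close> and \<open>M w\<close>\<close>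
    define f where "f x k = (\<Sum>y<Suc k. N y x) - (\<Sum>y<Suc k. M y w)" for x k
    have "\<exists>x\<in>{..<m}. 0 \<le> (\<Sum>k<n. a k * f x k)" if a: "\<forall>k<n. 0 \<le> a k" for a
    proof -
      obtain x where "x < m"
        and "(\<Sum>k<n. a k * (\<Sum>y<Suc k. M y w)) \<le> (\<Sum>k<n. a k * (\<Sum>y<Suc k. N y x))"
        using desc_payoff_dominates_prefix_sums[OF dom \<open>0 < m\<close> w a] by blast
      then show ?thesis
        by (intro bexI[of _ x]) (simp_all add: f_def right_diff_distrib sum_subtractf)
    qed
    then obtain c where c_nonneg: "\<forall>x\<in>{..<m}. 0 \<le> c x" and c_sum: "(\<Sum>x\<in>{..<m}. c x) = 1"
      and c_gap: "\<forall>k<n. 0 \<le> (\<Sum>x\<in>{..<m}. c x * f x k)"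
      using gordan_alternative_indexed[of "{..<m}" n f] by blast
    have "(\<Sum>y<t. M y w) \<le> (\<Sum>y<t. \<Sum>x<m. c x * N y x)" if "t \<le> n" for t
    proof (cases t)
      case (Suc k)
      have "(\<Sum>x<m. c x * f x k)
          = (\<Sum>y<Suc k. \<Sum>x<m. c x * N y x) - (\<Sum>x<m. c x) * (\<Sum>y<Suc k. M y w)"
        by (simp add: f_def right_diff_distrib sum_subtractf sum_distrib_left sum_distrib_right
            sum.swap[of _ "{..<m}"] del: sum.lessThan_Suc)
      then show ?thesis using c_gap[rule_format, of k] c_sum Suc that by simp
    qed simp
    moreover have "nonincreasing n (\<lambda>y. \<Sum>x<m. c x * N y x)"
      using c_nonneg nN by (simp add: nonincreasing_nonneg_combination)
    ultimately have "majorizes n (\<lambda>y. \<Sum>x<m. c x * N y x) (\<lambda>y. M y w)"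
      using nM w by (simp add: majorizes_nonincreasing_iff)
    moreover have "prob_vec m c" using c_nonneg c_sum by (simp add: prob_vec_def)
    ultimately show ?thesis by blast
  qed
  then obtain c where "\<forall>w<m'. prob_vec m (c w) \<and>
      majorizes n (\<lambda>y. \<Sum>x<m. c w x * N y x) (\<lambda>y. M y w)"
    by metis
  then show ?thesis
    unfolding mix_majorizes_def col_stochastic_def by (intro exI[of _ "\<lambda>x w. c w x"]) simp
qed

lemma prefix_sum_pos:
  assumes "prob_vec n q" and "nonincreasing n q" and "k < n"
  shows "0 < (\<Sum>i<Suc k. q i)"
proof -
  have "0 < q 0"
  proof (rule ccontr)
    assume "\<not> 0 < q 0"
    then have "(\<Sum>i<n. q i) \<le> 0"
      using assms(2) by (intro sum_nonpos) (force simp: nonincreasing_def)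
    then show False using assms(1) by (simp add: prob_vec_def)
  qed
  also have "q 0 \<le> (\<Sum>i<Suc k. q i)"
    using assms by (intro member_le_sum) (auto simp: prob_vec_def)
  finally show ?thesis .
qed

lemma desc_payoff_dominates_imp_kyfan_ratio_dominates:
  assumes dom: "desc_payoff_dominates n m N m' M" and "0 < m" and cM: "col_stochastic n m' M"
    and nN: "\<forall>x<m. nonincreasing n (\<lambda>y. N y x)" and nM: "\<forall>w<m'. nonincreasing n (\<lambda>y. M y w)"
  shows "kyfan_ratio_dominates n m N m' M"
  unfolding kyfan_ratio_dominates_def
proof (intro allI impI)
  fix t w assume t: "prob_vec n t" and "w < m'"
  define Q where "Q k = (\<Sum>y<Suc k. M y w)" for k
  have Q_pos: "0 < Q k" if "k < n" for k
    using prefix_sum_pos[of n "\<lambda>y. M y w" k] cM nM \<open>w < m'\<close> that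
    by (simp add: Q_def col_stochastic_def)
  \<comment> \<open>weight the prefix sums by \<open>t k / Q k\<close>, so that the payoff of \<open>M w\<close> becomes \<open>\<Sum>k. t k = 1\<close>\<close>
  define a where "a k = t k / Q k" for k
  have "\<forall>k<n. 0 \<le> a k" using t Q_pos by (auto simp: a_def prob_vec_def intro!: divide_nonneg_pos)
  then obtain x where "x < m"
    and x: "(\<Sum>k<n. a k * Q k) \<le> (\<Sum>k<n. a k * (\<Sum>y<Suc k. N y x))"
    using desc_payoff_dominates_prefix_sums[OF dom \<open>0 < m\<close> \<open>w < m'\<close>] by (auto simp: Q_def)
  have "(\<Sum>k<n. a k * Q k) = (\<Sum>k<n. t k)"
    using Q_pos by (intro sum.cong) (simp_all add: a_def less_imp_neq[symmetric])
  also have "\<dots> = 1" using t by (simp add: prob_vec_def)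
  finally have "1 \<le> (\<Sum>k<n. a k * (\<Sum>y<Suc k. N y x))" using x by simp
  also have "(\<Sum>k<n. a k * (\<Sum>y<Suc k. N y x))
      = (\<Sum>k<n. t k * (kyfan n (\<lambda>y. N y x) (Suc k) / kyfan n (\<lambda>y. M y w) (Suc k)))"
    using nN nM \<open>x < m\<close> \<open>w < m'\<close> by (intro sum.cong) (simp_all add: a_def Q_def kyfan_nonincreasing)
  also have "\<dots> \<le> Max ((\<lambda>x. \<Sum>k<n. t k * (kyfan n (\<lambda>y. N y x) (Suc k)
                                   / kyfan n (\<lambda>y. M y w) (Suc k))) ` {..<m})"
    using \<open>x < m\<close> by (intro Max_ge) auto
  finally show "1 \<le> \<dots>" .
qed

lemma kyfan_ratio_dominates_imp_desc_payoff_dominates: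
  assumes ratio: "kyfan_ratio_dominates n m N m' M" and "0 < m" and "0 < m'"
    and cN: "col_stochastic n m N" and cM: "col_stochastic n m' M"
    and nN: "\<forall>x<m. nonincreasing n (\<lambda>y. N y x)" and nM: "\<forall>w<m'. nonincreasing n (\<lambda>y. M y w)"
  shows "desc_payoff_dominates n m N m' M"
  unfolding desc_payoff_dominates_def
proof (intro allI impI)
  fix s assume "prob_vec_desc n s"
  then have s: "nonincreasing n s" "\<forall>i<n. 0 \<le> s i" by (auto simp: prob_vec_desc_def prob_vec_def)
  obtain a where a: "\<forall>k<n. 0 \<le> a k"
    and abel: "\<And>p. (\<Sum>y<n. s y * p y) = (\<Sum>k<n. a k * (\<Sum>y<Suc k. p y))"
    using nonincreasing_tail_sum_decomposition[OF s] by blast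
  let ?max = "Max ((\<lambda>x. \<Sum>y<n. s y * N y x) ` {..<m})"
  obtain w where "w < m'" and w: "Max ((\<lambda>w. \<Sum>y<n. s y * M y w) ` {..<m'}) = (\<Sum>y<n. s y * M y w)"
    by (rule Max_image_lessThan_obtain[OF \<open>0 < m'\<close>])
  define B where "B = (\<Sum>y<n. s y * M y w)"
  show "Max ((\<lambda>w. \<Sum>y<n. s y * M y w) ` {..<m'}) \<le> ?max"
  proof (cases "B \<le> 0")
    case True
    have "0 \<le> (\<Sum>y<n. s y * N y 0)"
      using s cN \<open>0 < m\<close> by (intro sum_nonneg mult_nonneg_nonneg) (auto simp: col_stochastic_def prob_vec_def)
    also have "\<dots> \<le> ?max" using \<open>0 < m\<close> by (intro Max_ge) auto
    finally show ?thesis using True w by (simp add: B_def)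
  next
    case False
    define Q where "Q k = (\<Sum>y<Suc k. M y w)" for k
    have Q_pos: "0 < Q k" if "k < n" for k
      using prefix_sum_pos[of n "\<lambda>y. M y w" k] cM nM \<open>w < m'\<close> that
      by (simp add: Q_def col_stochastic_def)
    have B: "B = (\<Sum>k<n. a k * Q k)" unfolding B_def Q_def by (rule abel)
    \<comment> \<open>the distribution that puts on \<open>k\<close> the share of \<open>B\<close> contributed by the \<open>k\<close>-th prefix sum\<close>
    define t where "t k = a k * Q k / B" for k
    have "0 \<le> t k" if "k < n" for k
      using a Q_pos[OF that] False that by (simp add: t_def zero_le_mult_iff)
    then have "prob_vec n t"
      using B False by (simp add: prob_vec_def t_def sum_divide_distrib[symmetric])
    then have "1 \<le> Max ((\<lambda>x. \<Sum>k<n. t k * (kyfan n (\<lambda>y. N y x) (Suc k)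
                                        / kyfan n (\<lambda>y. M y w) (Suc k))) ` {..<m})"
      using ratio \<open>w < m'\<close> unfolding kyfan_ratio_dominates_def by blast
    moreover obtain x where "x < m"
      and "Max ((\<lambda>x. \<Sum>k<n. t k * (kyfan n (\<lambda>y. N y x) (Suc k)
                                   / kyfan n (\<lambda>y. M y w) (Suc k))) ` {..<m})
         = (\<Sum>k<n. t k * (kyfan n (\<lambda>y. N y x) (Suc k) / kyfan n (\<lambda>y. M y w) (Suc k)))"
      by (rule Max_image_lessThan_obtain[OF \<open>0 < m\<close>])
    ultimately have "1 \<le> (\<Sum>k<n. t k * (kyfan n (\<lambda>y. N y x) (Suc k)
                                        / kyfan n (\<lambda>y. M y w) (Suc k)))"
      by simp
    also have "\<dots> = (\<Sum>k<n. a k * (\<Sum>y<Suc k. N y x) / B)"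
    proof (rule sum.cong)
      fix k assume "k \<in> {..<n}"
      then show "t k * (kyfan n (\<lambda>y. N y x) (Suc k) / kyfan n (\<lambda>y. M y w) (Suc k))
          = a k * (\<Sum>y<Suc k. N y x) / B"
        using nN nM \<open>x < m\<close> \<open>w < m'\<close> Q_pos[of k]
        by (simp add: t_def Q_def kyfan_nonincreasing del: sum.lessThan_Suc)
    qed simp
    also have "\<dots> = (\<Sum>k<n. a k * (\<Sum>y<Suc k. N y x)) / B"
      by (simp add: sum_divide_distrib del: sum.lessThan_Suc)
    also have "\<dots> = (\<Sum>y<n. s y * N y x) / B" by (simp only: abel)
    finally have "B \<le> (\<Sum>y<n. s y * N y x)" using False by (simp add: le_divide_eq)
    also have "\<dots> \<le> ?max" using \<open>x < m\<close> by (intro Max_ge) auto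
    finally show ?thesis using w by (simp add: B_def)
  qed
qed

theorem theorem8:
  fixes n m m' :: nat and N M :: "nat \<Rightarrow> nat \<Rightarrow> real"
  assumes "0 < n" and "0 < m" and "0 < m'"
    and "col_stochastic n m N" and "col_stochastic n m' M"
    and "\<forall>x<m. nonincreasing n (\<lambda>y. N y x)"
    and "\<forall>w<m'. nonincreasing n (\<lambda>y. M y w)"
  shows
   "(channel_majorizes n m N m' M
       \<longleftrightarrow> set_majorizes n (conv_channel n m N) (conv_channel n m' M)) \<and>
    (set_majorizes n (conv_channel n m N) (conv_channel n m' M)
       \<longleftrightarrow> (\<exists>S. col_stochastic m m' S \<and>
              (\<forall>w<m'. majorizes n (\<lambda>y. \<Sum>x<m. S x w * N y x) (\<lambda>y. M y w)))) \<and>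
    ((\<exists>S. col_stochastic m m' S \<and>
              (\<forall>w<m'. majorizes n (\<lambda>y. \<Sum>x<m. S x w * N y x) (\<lambda>y. M y w)))
       \<longleftrightarrow> (\<forall>s. prob_vec_desc n s \<longrightarrow>
              Max ((\<lambda>w. \<Sum>y<n. s y * M y w) ` {..<m'})
                \<le> Max ((\<lambda>x. \<Sum>y<n. s y * N y x) ` {..<m}))) \<and>
    ((\<forall>s. prob_vec_desc n s \<longrightarrow>
              Max ((\<lambda>w. \<Sum>y<n. s y * M y w) ` {..<m'})
                \<le> Max ((\<lambda>x. \<Sum>y<n. s y * N y x) ` {..<m}))
       \<longleftrightarrow> (\<forall>t. prob_vec n t \<longrightarrow> (\<forall>w<m'.
              1 \<le> Max ((\<lambda>x. \<Sum>k<n. t k * (kyfan n (\<lambda>y. N y x) (Suc k)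
                                           / kyfan n (\<lambda>y. M y w) (Suc k))) ` {..<m}))))"
proof -
  note cN = assms(4) and cM = assms(5) and nN = assms(6) and nM = assms(7)
  have "channel_majorizes n m N m' M \<longleftrightarrow> mix_majorizes n m N m' M"
    using channel_majorizes_imp_mix_majorizes[OF _ nN nM]
      mix_majorizes_imp_channel_majorizes[OF _ cN cM nN nM] by blast
  moreover have "set_majorizes n (conv_channel n m N) (conv_channel n m' M) \<longleftrightarrow> mix_majorizes n m N m' M"
    using set_majorizes_imp_mix_majorizes mix_majorizes_imp_set_majorizes[OF _ nN nM] by blast
  moreover have "mix_majorizes n m N m' M \<longleftrightarrow> desc_payoff_dominates n m N m' M"
    using mix_majorizes_imp_desc_payoff_dominates[OF _ \<open>0 < m'\<close> nN nM]
      desc_payoff_dominates_imp_mix_majorizes[OF _ \<open>0 < m\<close> nN nM] by blast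
  moreover have "desc_payoff_dominates n m N m' M \<longleftrightarrow> kyfan_ratio_dominates n m N m' M"
    using desc_payoff_dominates_imp_kyfan_ratio_dominates[OF _ \<open>0 < m\<close> cM nN nM]
      kyfan_ratio_dominates_imp_desc_payoff_dominates[OF _ \<open>0 < m\<close> \<open>0 < m'\<close> cN cM nN nM] by blast
  ultimately show ?thesis
    unfolding mix_majorizes_def desc_payoff_dominates_def kyfan_ratio_dominates_def by blast
qed

end
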